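(* Every Kan fibration of simplicial sets is a Skvortsov–Shehtman fibration; in particular, every Kan complex is a Skvortsov–Shehtman complex.
   Context: For $n>1$ and $0\le p<q\le n$, the $(p,q)$-th rhombus $R_{p,q}[n]\subseteq\Delta[n]$ is the union of the $p$-th and $q$-th faces of the standard simplex $\Delta[n]$. A simplicial map $f:E\to B$ is a Skvortsov–Shehtman fibration if for all $n>1$, $0\le p<q\le n$, every commutative square with top map $R_{p,q}[n]\to E$, left map the inclusion $R_{p,q}[n]\hookrightarrow\Delta[n]$, right map $f$ and bottom map $\Delta[n]\to B$ admits a diagonal filler $\Delta[n]\to E$ making both triangles commute. A simplicial set $S$ is a Skvortsov–Shehtman complex if $S\to *$ is a Skvortsov–Shehtman fibration. Kan fibrations are maps with the right lifting property against all horn inclusions $\Lambda_p[n]\hookrightarrow\Delta[n]$, $n>0$, $0\le p\le n$. *)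

theory Defs
  imports Main
begin

text \<open>An operator
  theta : [m] -> [k] is a monotone map {0..m} -> {0..k}, represented by a
  function nat => nat (only its values on {0..m} matter).\<close>

record 'a sset =
  simp :: "nat \<Rightarrow> 'a set"
  act  :: "nat \<Rightarrow> nat \<Rightarrow> (nat \<Rightarrow> nat) \<Rightarrow> 'a \<Rightarrow> 'a"

definition is_op :: "nat \<Rightarrow> nat \<Rightarrow> (nat \<Rightarrow> nat) \<Rightarrow> bool" where
  "is_op m k \<theta> \<longleftrightarrow> (\<forall>i j. i \<le> j \<and> j \<le> m \<longrightarrow> \<theta> i \<le> \<theta> j) \<and> (\<forall>i\<le>m. \<theta> i \<le> k)"

definition is_sset :: "'a sset \<Rightarrow> bool" where
  "is_sset X \<longleftrightarrow>
     (\<forall>m k \<theta> x. is_op m k \<theta> \<and> x \<in> simp X k \<longrightarrow> act X m k \<theta> x \<in> simp X m) \<and>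
     (\<forall>m k \<theta> \<theta>' x. is_op m k \<theta> \<and> (\<forall>i\<le>m. \<theta> i = \<theta>' i) \<and> x \<in> simp X k
         \<longrightarrow> act X m k \<theta>' x = act X m k \<theta> x) \<and>
     (\<forall>n x. x \<in> simp X n \<longrightarrow> act X n n id x = x) \<and>
     (\<forall>l m k \<phi> \<theta> x. is_op l m \<phi> \<and> is_op m k \<theta> \<and> x \<in> simp X k
         \<longrightarrow> act X l m \<phi> (act X m k \<theta> x) = act X l k (\<theta> \<circ> \<phi>) x)"

definition smap :: "'a sset \<Rightarrow> 'b sset \<Rightarrow> (nat \<Rightarrow> 'a \<Rightarrow> 'b) \<Rightarrow> bool" where
  "smap X Y f \<longleftrightarrow>
     (\<forall>n x. x \<in> simp X n \<longrightarrow> f n x \<in> simp Y n) \<and>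
     (\<forall>m k \<theta> x. is_op m k \<theta> \<and> x \<in> simp X k \<longrightarrow> f m (act X m k \<theta> x) = act Y m k \<theta> (f k x))"

text \<open>The standard simplex Delta[n]: its m-simplices are the monotone maps
  [m] -> [n], written as the list of their values.\<close>
definition std_act :: "nat \<Rightarrow> nat \<Rightarrow> (nat \<Rightarrow> nat) \<Rightarrow> nat list \<Rightarrow> nat list" where
  "std_act m k \<theta> \<sigma> = map (\<lambda>i. \<sigma> ! \<theta> i) [0..<Suc m]"

definition Delta :: "nat \<Rightarrow> nat list sset" where
  "Delta n = \<lparr> simp = (\<lambda>m. {\<sigma>. length \<sigma> = Suc m \<and> sorted \<sigma> \<and> (\<forall>x\<in>set \<sigma>. x \<le> n)}),
              act = std_act \<rparr>"

definition sub_Delta :: "nat \<Rightarrow> (nat list \<Rightarrow> bool) \<Rightarrow> nat list sset" where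
  "sub_Delta n P = \<lparr> simp = (\<lambda>m. {\<sigma> \<in> simp (Delta n) m. P \<sigma>}), act = std_act \<rparr>"

text \<open>The p-th face of Delta[n] consists of the simplices missing the vertex p.
  Horn Lambda_p[n]: union of the faces i, i /= p.
  Rhombus R_{p,q}[n]: union of the p-th and q-th faces.\<close>
definition horn :: "nat \<Rightarrow> nat \<Rightarrow> nat list sset" where
  "horn n p = sub_Delta n (\<lambda>\<sigma>. \<exists>i\<le>n. i \<noteq> p \<and> i \<notin> set \<sigma>)"

definition rhombus :: "nat \<Rightarrow> nat \<Rightarrow> nat \<Rightarrow> nat list sset" where
  "rhombus n p q = sub_Delta n (\<lambda>\<sigma>. p \<notin> set \<sigma> \<or> q \<notin> set \<sigma>)"

definition lifts_against :: "nat \<Rightarrow> nat list sset \<Rightarrow> 'a sset \<Rightarrow> 'b sset \<Rightarrow> (nat \<Rightarrow> 'a \<Rightarrow> 'b) \<Rightarrow> bool" where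
  "lifts_against n A E B f \<longleftrightarrow>
     (\<forall>g b. smap A E g \<and> smap (Delta n) B b \<and>
            (\<forall>m. \<forall>\<sigma>\<in>simp A m. f m (g m \<sigma>) = b m \<sigma>) \<longrightarrow>
        (\<exists>h. smap (Delta n) E h \<and>
             (\<forall>m. \<forall>\<sigma>\<in>simp A m. h m \<sigma> = g m \<sigma>) \<and>
             (\<forall>m. \<forall>\<sigma>\<in>simp (Delta n) m. f m (h m \<sigma>) = b m \<sigma>)))"

definition kan_fibration :: "'a sset \<Rightarrow> 'b sset \<Rightarrow> (nat \<Rightarrow> 'a \<Rightarrow> 'b) \<Rightarrow> bool" where
  "kan_fibration E B f \<longleftrightarrow> (\<forall>n p. 0 < n \<and> p \<le> n \<longrightarrow> lifts_against n (horn n p) E B f)"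

definition ss_fibration :: "'a sset \<Rightarrow> 'b sset \<Rightarrow> (nat \<Rightarrow> 'a \<Rightarrow> 'b) \<Rightarrow> bool" where
  "ss_fibration E B f \<longleftrightarrow> (\<forall>n p q. 1 < n \<and> p < q \<and> q \<le> n \<longrightarrow> lifts_against n (rhombus n p q) E B f)"

definition terminal :: "unit sset" where
  "terminal = \<lparr> simp = (\<lambda>n. {()}), act = (\<lambda>m k \<theta> x. ()) \<rparr>"

definition to_terminal :: "nat \<Rightarrow> 'a \<Rightarrow> unit" where
  "to_terminal n x = ()"

definition kan_complex :: "'a sset \<Rightarrow> bool" where
  "kan_complex S \<longleftrightarrow> kan_fibration S terminal to_terminal"

definition ss_complex :: "'a sset \<Rightarrow> bool" where
  "ss_complex S \<longleftrightarrow> ss_fibration S terminal to_terminal"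

end

theory Submission imports Defs begin

text \<open>For a nonempty proper set F of vertices of Delta[n], let U(F) be the union of the
  faces opposite to the vertices in F. If F misses a single vertex r, then U(F) is the
  horn Lambda_r[n]. Otherwise pick i outside F: U(F \<union> {i}) arises from U(F) by gluing in
  the i-th face, a copy of Delta[n-1], along U(F') for the preimage F' of F under the
  i-th coface map. A lift against U(F) \<subseteq> Delta[n] is therefore obtained by first lifting
  on the i-th face (induction on n) and then against U(F \<union> {i}) (induction on the number
  of vertices outside F). The rhombus R_{p,q}[n] is U({p,q}).\<close>

definition face_union :: "nat \<Rightarrow> nat set \<Rightarrow> nat list sset" where
  "face_union n F = sub_Delta n (\<lambda>\<sigma>. \<exists>j\<in>F. j \<notin> set \<sigma>)"

definition coface :: "nat \<Rightarrow> nat \<Rightarrow> nat" where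
  "coface i j = (if j < i then j else Suc j)"

definition coface_inv :: "nat \<Rightarrow> nat \<Rightarrow> nat" where
  "coface_inv i j = (if j < i then j else j - 1)"

lemma simp_Delta: "simp (Delta n) m = {\<sigma>. length \<sigma> = Suc m \<and> sorted \<sigma> \<and> (\<forall>x\<in>set \<sigma>. x \<le> n)}"
  by (simp add: Delta_def)

lemma act_Delta: "act (Delta n) = std_act"
  by (simp add: Delta_def)

lemma simp_face_union: "simp (face_union n F) m = {\<sigma> \<in> simp (Delta n) m. \<exists>j\<in>F. j \<notin> set \<sigma>}"
  by (simp add: face_union_def sub_Delta_def)

lemma act_face_union: "act (face_union n F) = std_act"
  by (simp add: face_union_def sub_Delta_def)

lemma rhombus_eq_face_union: "rhombus n p q = face_union n {p, q}"
  by (simp add: rhombus_def face_union_def)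

lemma horn_eq_face_union: "r \<le> n \<Longrightarrow> horn n r = face_union n ({..n} - {r})"
  unfolding horn_def face_union_def by (rule arg_cong[where f = "sub_Delta n"]) auto

lemma length_std_act [simp]: "length (std_act m k \<theta> \<sigma>) = Suc m"
  by (simp add: std_act_def)

lemma set_std_act_subset:
  "is_op m k \<theta> \<Longrightarrow> length \<sigma> = Suc k \<Longrightarrow> set (std_act m k \<theta> \<sigma>) \<subseteq> set \<sigma>"
  by (auto simp: std_act_def is_op_def less_Suc_eq_le)

lemma sorted_std_act:
  assumes "is_op m k \<theta>" "length \<sigma> = Suc k" "sorted \<sigma>"
  shows "sorted (std_act m k \<theta> \<sigma>)"
proof -
  have "std_act m k \<theta> \<sigma> ! a \<le> std_act m k \<theta> \<sigma> ! b" if "a \<le> b" "b < Suc m" for a b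
  proof -
    have "\<theta> a \<le> \<theta> b" "\<theta> b \<le> k"
      using assms(1) that by (auto simp: is_op_def)
    then have "\<sigma> ! \<theta> a \<le> \<sigma> ! \<theta> b"
      using assms(2,3) by (simp add: sorted_iff_nth_mono)
    then show ?thesis
      using that by (simp add: std_act_def nth_map_upt del: upt_Suc)
  qed
  then show ?thesis by (simp add: sorted_iff_nth_mono)
qed

lemma std_act_in_Delta:
  "is_op m k \<theta> \<Longrightarrow> \<sigma> \<in> simp (Delta n) k \<Longrightarrow> std_act m k \<theta> \<sigma> \<in> simp (Delta n) m"
  unfolding simp_Delta using set_std_act_subset sorted_std_act by fastforce

lemma map_std_act:
  "is_op m k \<theta> \<Longrightarrow> length \<sigma> = Suc k \<Longrightarrow> map u (std_act m k \<theta> \<sigma>) = std_act m k \<theta> (map u \<sigma>)"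
  by (auto simp: std_act_def is_op_def less_Suc_eq_le)

lemma smap_in_simp: "smap X Y u \<Longrightarrow> x \<in> simp X n \<Longrightarrow> u n x \<in> simp Y n"
  by (simp add: smap_def)

lemma smap_act:
  "smap X Y u \<Longrightarrow> is_op m k \<theta> \<Longrightarrow> x \<in> simp X k \<Longrightarrow> u m (act X m k \<theta> x) = act Y m k \<theta> (u k x)"
  by (simp add: smap_def)

lemma smap_comp: "smap X Y u \<Longrightarrow> smap Y Z v \<Longrightarrow> smap X Z (\<lambda>m x. v m (u m x))"
  unfolding smap_def by auto

lemma coface_inv_coface [simp]: "coface_inv i (coface i j) = j"
  by (simp add: coface_inv_def coface_def)

lemma coface_coface_inv: "j \<noteq> i \<Longrightarrow> coface i (coface_inv i j) = j"
  by (auto simp: coface_inv_def coface_def)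

lemma mono_coface: "mono (coface i)"
  by (auto simp: mono_def coface_def)

lemma mono_coface_inv: "mono (coface_inv i)"
  by (auto simp: mono_def coface_inv_def)

lemma inj_coface: "inj (coface i)"
  by (metis coface_inv_coface injI)

lemma inj_on_coface_inv: "inj_on (coface_inv i) (- {i})"
  by (rule inj_on_inverseI[where g = "coface i"]) (simp add: coface_coface_inv)

lemma map_coface_coface_inv: "i \<notin> set \<sigma> \<Longrightarrow> map (coface i) (map (coface_inv i) \<sigma>) = \<sigma>"
  by (induct \<sigma>) (auto simp: coface_coface_inv)

lemma coface_image_atMost:
  assumes "i \<le> n" "0 < n"
  shows "coface i ` {..n - 1} = {..n} - {i}"
proof
  show "coface i ` {..n - 1} \<subseteq> {..n} - {i}"
    using assms by (auto simp: coface_def)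
  show "{..n} - {i} \<subseteq> coface i ` {..n - 1}"
  proof
    fix j assume "j \<in> {..n} - {i}"
    then have "coface_inv i j \<in> {..n - 1}" "coface i (coface_inv i j) = j"
      using assms(1) coface_coface_inv by (auto simp: coface_inv_def)
    then show "j \<in> coface i ` {..n - 1}" by (metis image_eqI)
  qed
qed

lemma smap_coface_Delta:
  assumes "i \<le> n" "0 < n"
  shows "smap (Delta (n - 1)) (Delta n) (\<lambda>m \<tau>. map (coface i) \<tau>)"
  unfolding smap_def simp_Delta act_Delta
  using assms by (auto simp: coface_def sorted_map map_std_act
      intro: sorted_wrt_mono_rel[of _ "(\<le>)"] monoD[OF mono_coface])

lemma smap_coface_face_union:
  assumes "i \<le> n" "0 < n"
  shows "smap (face_union (n - 1) {j. j < n \<and> coface i j \<in> F}) (face_union n F)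
           (\<lambda>m \<tau>. map (coface i) \<tau>)"
proof -
  have "\<exists>j\<in>F. j \<notin> coface i ` set \<tau>" if "\<exists>j\<in>{j. j < n \<and> coface i j \<in> F}. j \<notin> set \<tau>" for \<tau>
    using that inj_image_mem_iff[OF inj_coface] by blast
  then show ?thesis
    using smap_coface_Delta[OF assms]
    unfolding smap_def simp_face_union act_face_union act_Delta by auto
qed

lemma map_coface_inv_in_Delta:
  assumes "\<sigma> \<in> simp (Delta n) m" "i \<notin> set \<sigma>" "i \<le> n"
  shows "map (coface_inv i) \<sigma> \<in> simp (Delta (n - 1)) m"
proof -
  have "\<forall>x\<in>set \<sigma>. coface_inv i x \<le> n - 1"
    using assms by (auto simp: simp_Delta coface_inv_def)
  moreover have "sorted (map (coface_inv i) \<sigma>)"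
    using assms(1) by (auto simp: simp_Delta sorted_map
        intro: sorted_wrt_mono_rel[of _ "(\<le>)"] monoD[OF mono_coface_inv])
  ultimately show ?thesis
    using assms(1) by (simp add: simp_Delta)
qed

lemma map_coface_inv_in_face_union:
  assumes "\<sigma> \<in> simp (face_union n F) m" "i \<notin> set \<sigma>" "i \<le> n" "i \<notin> F" "F \<subseteq> {..n}"
  shows "map (coface_inv i) \<sigma> \<in> simp (face_union (n - 1) {j. j < n \<and> coface i j \<in> F}) m"
proof -
  obtain j where j: "j \<in> F" "j \<notin> set \<sigma>"
    using assms(1) by (auto simp: simp_face_union)
  then have "j \<le> n" "j \<noteq> i"
    using assms(4,5) by auto
  then have "coface_inv i j \<in> {j. j < n \<and> coface i j \<in> F}"
    using assms(3) j(1) coface_coface_inv by (auto simp: coface_inv_def)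
  moreover have "coface_inv i j \<notin> coface_inv i ` set \<sigma>"
    using j assms(2) \<open>j \<noteq> i\<close> by (subst inj_on_image_mem_iff[OF inj_on_coface_inv]) auto
  ultimately show ?thesis
    using assms map_coface_inv_in_Delta by (fastforce simp: simp_face_union)
qed

definition face_glue ::
    "nat set \<Rightarrow> nat \<Rightarrow> (nat \<Rightarrow> nat list \<Rightarrow> 'a) \<Rightarrow> (nat \<Rightarrow> nat list \<Rightarrow> 'a) \<Rightarrow> nat \<Rightarrow> nat list \<Rightarrow> 'a" where
  "face_glue F i g k m \<sigma> = (if \<exists>j\<in>F. j \<notin> set \<sigma> then g m \<sigma> else k m (map (coface_inv i) \<sigma>))"

lemma face_glue_eq_face:
  assumes "\<sigma> \<in> simp (Delta n) m" "i \<notin> set \<sigma>" "i \<le> n" "i \<notin> F" "F \<subseteq> {..n}"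
    and agree: "\<forall>m. \<forall>\<tau>\<in>simp (face_union (n - 1) {j. j < n \<and> coface i j \<in> F}) m.
                  k m \<tau> = g m (map (coface i) \<tau>)"
  shows "face_glue F i g k m \<sigma> = k m (map (coface_inv i) \<sigma>)"
proof (cases "\<exists>j\<in>F. j \<notin> set \<sigma>")
  case True
  then have "\<sigma> \<in> simp (face_union n F) m"
    using assms(1) by (simp add: simp_face_union)
  then have "map (coface_inv i) \<sigma> \<in> simp (face_union (n - 1) {j. j < n \<and> coface i j \<in> F}) m"
    using map_coface_inv_in_face_union assms(2-5) by blast
  then have "k m (map (coface_inv i) \<sigma>) = g m \<sigma>"
    using agree map_coface_coface_inv[OF assms(2)] by simp
  then show ?thesis
    using True by (simp add: face_glue_def)
qed (simp add: face_glue_def)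

lemma smap_face_glue:
  assumes g: "smap (face_union n F) E g" and k: "smap (Delta (n - 1)) E k"
    and agree: "\<forall>m. \<forall>\<tau>\<in>simp (face_union (n - 1) {j. j < n \<and> coface i j \<in> F}) m.
                  k m \<tau> = g m (map (coface i) \<tau>)"
    and F: "i \<le> n" "i \<notin> F" "F \<subseteq> {..n}"
  shows "smap (face_union n (insert i F)) E (face_glue F i g k)"
  unfolding smap_def
proof (intro conjI allI impI)
  fix m \<sigma> assume "\<sigma> \<in> simp (face_union n (insert i F)) m"
  then show "face_glue F i g k m \<sigma> \<in> simp E m"
  proof (cases "\<exists>j\<in>F. j \<notin> set \<sigma>")
    case True
    with \<open>\<sigma> \<in> _\<close> have "\<sigma> \<in> simp (face_union n F) m"
      by (simp add: simp_face_union)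
    with True g show ?thesis
      by (simp add: face_glue_def smap_in_simp)
  next
    case False
    with \<open>\<sigma> \<in> _\<close> have "map (coface_inv i) \<sigma> \<in> simp (Delta (n - 1)) m"
      using map_coface_inv_in_Delta F(1) by (auto simp: simp_face_union)
    with False k show ?thesis
      by (simp add: face_glue_def smap_in_simp)
  qed
next
  fix m l \<theta> \<sigma> assume a: "is_op m l \<theta> \<and> \<sigma> \<in> simp (face_union n (insert i F)) l"
  define \<tau> where "\<tau> = std_act m l \<theta> \<sigma>"
  have \<sigma>: "\<sigma> \<in> simp (Delta n) l"
    using a by (simp add: simp_face_union)
  have \<tau>: "\<tau> \<in> simp (Delta n) m" "set \<tau> \<subseteq> set \<sigma>"
    using a \<sigma> std_act_in_Delta set_std_act_subset by (auto simp: \<tau>_def simp_Delta)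
  show "face_glue F i g k m (act (face_union n (insert i F)) m l \<theta> \<sigma>)
          = act E m l \<theta> (face_glue F i g k l \<sigma>)"
    unfolding act_face_union \<tau>_def[symmetric]
  proof (cases "\<exists>j\<in>F. j \<notin> set \<sigma>")
    case True
    then have "\<sigma> \<in> simp (face_union n F) l"
      using \<sigma> by (simp add: simp_face_union)
    with smap_act[OF g] a have "g m \<tau> = act E m l \<theta> (g l \<sigma>)"
      by (simp add: act_face_union \<tau>_def)
    moreover have "\<exists>j\<in>F. j \<notin> set \<tau>"
      using True \<tau>(2) by blast
    ultimately show "face_glue F i g k m \<tau> = act E m l \<theta> (face_glue F i g k l \<sigma>)"
      using True by (simp add: face_glue_def)
  next
    case False
    then have i: "i \<notin> set \<sigma>" "i \<notin> set \<tau>"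
      using a \<tau>(2) by (auto simp: simp_face_union)
    have "act E m l \<theta> (face_glue F i g k l \<sigma>) = act E m l \<theta> (k l (map (coface_inv i) \<sigma>))"
      using False by (simp add: face_glue_def)
    also have "\<dots> = k m (std_act m l \<theta> (map (coface_inv i) \<sigma>))"
      using smap_act[OF k _ map_coface_inv_in_Delta[OF \<sigma> i(1) F(1)]] a by (simp add: act_Delta)
    also have "\<dots> = k m (map (coface_inv i) \<tau>)"
      using map_std_act[of m l \<theta> \<sigma> "coface_inv i"] a \<sigma> by (simp add: \<tau>_def simp_Delta)
    also have "\<dots> = face_glue F i g k m \<tau>"
      using face_glue_eq_face[OF \<tau>(1) i(2) F agree] by (rule sym)
    finally show "face_glue F i g k m \<tau> = act E m l \<theta> (face_glue F i g k l \<sigma>)" by (rule sym)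
  qed
qed

lemma lifts_against_face_union_step:
  assumes face: "lifts_against (n - 1) (face_union (n - 1) {j. j < n \<and> coface i j \<in> F}) E B f"
    and ext: "lifts_against n (face_union n (insert i F)) E B f"
    and F: "i \<le> n" "i \<notin> F" "F \<subseteq> {..n}" and "0 < n"
  shows "lifts_against n (face_union n F) E B f"
  unfolding lifts_against_def
proof (intro allI impI)
  fix g b
  assume gb: "smap (face_union n F) E g \<and> smap (Delta n) B b \<and>
              (\<forall>m. \<forall>\<sigma>\<in>simp (face_union n F) m. f m (g m \<sigma>) = b m \<sigma>)"
  let ?F' = "{j. j < n \<and> coface i j \<in> F}"
  have "smap (face_union (n - 1) ?F') E (\<lambda>m \<tau>. g m (map (coface i) \<tau>))"
    using smap_comp[OF smap_coface_face_union[OF F(1) \<open>0 < n\<close>]] gb by blast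
  moreover have "smap (Delta (n - 1)) B (\<lambda>m \<tau>. b m (map (coface i) \<tau>))"
    using smap_comp[OF smap_coface_Delta[OF F(1) \<open>0 < n\<close>]] gb by blast
  moreover have "\<forall>m. \<forall>\<tau>\<in>simp (face_union (n - 1) ?F') m.
                   f m (g m (map (coface i) \<tau>)) = b m (map (coface i) \<tau>)"
    using gb smap_coface_face_union[OF F(1) \<open>0 < n\<close>] unfolding smap_def by blast
  ultimately obtain k where k: "smap (Delta (n - 1)) E k"
      "\<forall>m. \<forall>\<tau>\<in>simp (face_union (n - 1) ?F') m. k m \<tau> = g m (map (coface i) \<tau>)"
      "\<forall>m. \<forall>\<tau>\<in>simp (Delta (n - 1)) m. f m (k m \<tau>) = b m (map (coface i) \<tau>)"
    using face unfolding lifts_against_def by blast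
  have "\<forall>m. \<forall>\<sigma>\<in>simp (face_union n (insert i F)) m. f m (face_glue F i g k m \<sigma>) = b m \<sigma>"
    using gb k(3) map_coface_inv_in_Delta F(1) map_coface_coface_inv
    by (auto simp: face_glue_def simp_face_union)
  then obtain h where h: "smap (Delta n) E h"
      "\<forall>m. \<forall>\<sigma>\<in>simp (face_union n (insert i F)) m. h m \<sigma> = face_glue F i g k m \<sigma>"
      "\<forall>m. \<forall>\<sigma>\<in>simp (Delta n) m. f m (h m \<sigma>) = b m \<sigma>"
    using ext smap_face_glue[OF _ k(1,2) F] gb unfolding lifts_against_def by blast
  moreover have "\<forall>m. \<forall>\<sigma>\<in>simp (face_union n F) m. h m \<sigma> = g m \<sigma>"
    using h(2) by (auto simp: simp_face_union face_glue_def)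
  ultimately show "\<exists>h. smap (Delta n) E h \<and> (\<forall>m. \<forall>\<sigma>\<in>simp (face_union n F) m. h m \<sigma> = g m \<sigma>) \<and>
                       (\<forall>m. \<forall>\<sigma>\<in>simp (Delta n) m. f m (h m \<sigma>) = b m \<sigma>)"
    by blast
qed

lemma lifts_against_face_union:
  assumes kan: "kan_fibration E B f"
  shows "F \<subseteq> {..n} \<Longrightarrow> F \<noteq> {} \<Longrightarrow> F \<noteq> {..n} \<Longrightarrow> lifts_against n (face_union n F) E B f"
proof (induction n arbitrary: F rule: less_induct)
  case (less n)
  note lower_dim = less.IH
  from less.prems show ?case
  proof (induction "n - card F" arbitrary: F rule: less_induct)
    case less
    obtain i where i: "i \<le> n" "i \<notin> F"
      using less.prems by auto
    show ?case
    proof (cases "insert i F = {..n}")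
      case True
      then have "F = {..n} - {i}" "0 < n"
        using i less.prems by auto
      then show ?thesis
        using kan i horn_eq_face_union by (simp add: kan_fibration_def)
    next
      case False
      have "finite F"
        using less.prems(1) finite_subset by blast
      moreover have "card (insert i F) < card {..n}"
        using less.prems(1) i False by (intro psubset_card_mono) auto
      ultimately have "n - card (insert i F) < n - card F"
        using i(2) by simp
      then have ext: "lifts_against n (face_union n (insert i F)) E B f"
        using less.hyps[of "insert i F"] less.prems(1) i False by auto
      obtain j where "j \<in> F"
        using less.prems(2) by auto
      moreover have "j \<noteq> i" "j \<le> n"
        using \<open>j \<in> F\<close> less.prems(1) i by auto
      ultimately have "0 < n" "coface_inv i j < n"
        using i(1) by (auto simp: coface_inv_def)
      moreover have "coface i (coface_inv i j) \<in> F"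
        using \<open>j \<in> F\<close> \<open>j \<noteq> i\<close> by (simp add: coface_coface_inv)
      moreover have "{j. j < n \<and> coface i j \<in> F} \<noteq> {..n - 1}"
      proof
        assume "{j. j < n \<and> coface i j \<in> F} = {..n - 1}"
        then have "coface i ` {..n - 1} \<subseteq> F"
          by blast
        then have "{..n} \<subseteq> insert i F"
          using coface_image_atMost[OF i(1) \<open>0 < n\<close>] by blast
        then show False
          using False i(1) less.prems(1) by blast
      qed
      ultimately have "lifts_against (n - 1) (face_union (n - 1) {j. j < n \<and> coface i j \<in> F}) E B f"
        by (intro lower_dim) auto
      then show ?thesis
        using lifts_against_face_union_step[OF _ ext i less.prems(1) \<open>0 < n\<close>] by blast
    qed
  qed
qed

lemma kan_fibration_imp_ss_fibration: "kan_fibration E B f \<Longrightarrow> ss_fibration E B f"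
  unfolding ss_fibration_def rhombus_eq_face_union
proof (intro allI impI)
  fix n p q :: nat
  assume kan: "kan_fibration E B f" and pq: "1 < n \<and> p < q \<and> q \<le> n"
  then have "card {p, q} \<noteq> card {..n}"
    by simp
  then have "{p, q} \<noteq> {..n}"
    by metis
  with kan pq show "lifts_against n (face_union n {p, q}) E B f"
    by (intro lifts_against_face_union) auto
qed

theorem mainTheorem3:
  fixes E :: "'a sset" and B :: "'b sset" and f :: "nat \<Rightarrow> 'a \<Rightarrow> 'b" and S :: "'c sset"
  shows "(is_sset E \<and> is_sset B \<and> smap E B f \<and> kan_fibration E B f \<longrightarrow> ss_fibration E B f)
       \<and> (is_sset S \<and> kan_complex S \<longrightarrow> ss_complex S)"
  unfolding kan_complex_def ss_complex_def by (simp add: kan_fibration_imp_ss_fibration)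

end
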